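(* Let $E$ be a graph such that any two boundary paths of $E$ are shift-tail equivalent. Then every nonempty saturated hereditary subset of $E^0$ is equal to $E^0$.
   Context: A graph $E=(E^0,E^1,r,s)$ has vertex set $E^0$, edge set $E^1$, range and source maps. A vertex is singular if it emits no edges or infinitely many edges, regular otherwise. $H\subseteq E^0$ is hereditary if $s(e)\in H$ implies $r(e)\in H$ for every $e\in E^1$; it is saturated if every regular vertex $v$ with $r(s^{-1}(v))\subseteq H$ lies in $H$. Boundary paths: infinite paths $e_1e_2\cdots$ ($r(e_i)=s(e_{i+1})$) together with finite paths (including vertices as length-$0$ paths) whose range is singular. The shift $\sigma_E$ removes the first edge (fixes vertices; sends a single edge $e$ to $r(e)$); boundary paths $\alpha,\beta$ are shift-tail equivalent if $\sigma_E^m(\alpha)=\sigma_E^n(\beta)$ for some $m,n\in\mathbb{N}$. *)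

theory Defs
  imports Main
begin

definition is_graph :: "'v set \<Rightarrow> 'e set \<Rightarrow> ('e \<Rightarrow> 'v) \<Rightarrow> ('e \<Rightarrow> 'v) \<Rightarrow> bool" where
  "is_graph V Ed r s \<longleftrightarrow> (\<forall>e\<in>Ed. r e \<in> V \<and> s e \<in> V)"

definition emits :: "'e set \<Rightarrow> ('e \<Rightarrow> 'v) \<Rightarrow> 'v \<Rightarrow> 'e set" where
  "emits Ed s v = {e \<in> Ed. s e = v}"

definition singular :: "'e set \<Rightarrow> ('e \<Rightarrow> 'v) \<Rightarrow> 'v \<Rightarrow> bool" where
  "singular Ed s v \<longleftrightarrow> emits Ed s v = {} \<or> infinite (emits Ed s v)"

definition regular :: "'e set \<Rightarrow> ('e \<Rightarrow> 'v) \<Rightarrow> 'v \<Rightarrow> bool" where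
  "regular Ed s v \<longleftrightarrow> \<not> singular Ed s v"

definition hereditary :: "'v set \<Rightarrow> 'e set \<Rightarrow> ('e \<Rightarrow> 'v) \<Rightarrow> ('e \<Rightarrow> 'v) \<Rightarrow> 'v set \<Rightarrow> bool" where
  "hereditary V Ed r s H \<longleftrightarrow> H \<subseteq> V \<and> (\<forall>e\<in>Ed. s e \<in> H \<longrightarrow> r e \<in> H)"

definition saturated :: "'v set \<Rightarrow> 'e set \<Rightarrow> ('e \<Rightarrow> 'v) \<Rightarrow> ('e \<Rightarrow> 'v) \<Rightarrow> 'v set \<Rightarrow> bool" where
  "saturated V Ed r s H \<longleftrightarrow>
     (\<forall>v\<in>V. regular Ed s v \<and> r ` emits Ed s v \<subseteq> H \<longrightarrow> v \<in> H)"

text \<open>Paths: a vertex (length 0), a nonempty finite list of edges, or an infinite sequence of edges.\<close>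
datatype ('v, 'e) gpath = Vtx 'v | Fin "'e list" | Inf "nat \<Rightarrow> 'e"

fun is_boundary_path :: "'v set \<Rightarrow> 'e set \<Rightarrow> ('e \<Rightarrow> 'v) \<Rightarrow> ('e \<Rightarrow> 'v) \<Rightarrow> ('v, 'e) gpath \<Rightarrow> bool" where
  "is_boundary_path V Ed r s (Vtx v) \<longleftrightarrow> v \<in> V \<and> singular Ed s v"
| "is_boundary_path V Ed r s (Fin es) \<longleftrightarrow> es \<noteq> [] \<and> set es \<subseteq> Ed
     \<and> (\<forall>i. Suc i < length es \<longrightarrow> r (es ! i) = s (es ! Suc i))
     \<and> singular Ed s (r (last es))"
| "is_boundary_path V Ed r s (Inf f) \<longleftrightarrow> (\<forall>n. f n \<in> Ed \<and> r (f n) = s (f (Suc n)))"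

fun shift :: "('e \<Rightarrow> 'v) \<Rightarrow> ('v, 'e) gpath \<Rightarrow> ('v, 'e) gpath" where
  "shift r (Vtx v) = Vtx v"
| "shift r (Fin []) = Fin []"
| "shift r (Fin [e]) = Vtx (r e)"
| "shift r (Fin (e # e' # es)) = Fin (e' # es)"
| "shift r (Inf f) = Inf (\<lambda>n. f (Suc n))"

definition shift_tail_equiv :: "('e \<Rightarrow> 'v) \<Rightarrow> ('v, 'e) gpath \<Rightarrow> ('v, 'e) gpath \<Rightarrow> bool" where
  "shift_tail_equiv r \<alpha> \<beta> \<longleftrightarrow> (\<exists>m n. (shift r ^^ m) \<alpha> = (shift r ^^ n) \<beta>)"

end

theory Submission
  imports Defs
begin

text \<open>
  If H were a proper nonempty saturated hereditary set, then both H and its complement would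
  have the property that every regular vertex in them emits an edge ending in them again: for H
  because it is hereditary, for the complement because H is saturated. Following such edges
  greedily from a vertex, and stopping at the first singular vertex, produces a boundary path
  running entirely inside H, and another one running entirely outside H. Shifting a path never
  leaves such a set, so these two boundary paths cannot be shift-tail equivalent.
\<close>

fun path_within :: "('e \<Rightarrow> 'v) \<Rightarrow> ('e \<Rightarrow> 'v) \<Rightarrow> 'v set \<Rightarrow> ('v, 'e) gpath \<Rightarrow> bool" where
  "path_within r s X (Vtx v) \<longleftrightarrow> v \<in> X"
| "path_within r s X (Fin es) \<longleftrightarrow> es \<noteq> [] \<and> (\<forall>e\<in>set es. s e \<in> X \<and> r e \<in> X)"
| "path_within r s X (Inf f) \<longleftrightarrow> (\<forall>n. s (f n) \<in> X \<and> r (f n) \<in> X)"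

lemma path_within_shift: "path_within r s X p \<Longrightarrow> path_within r s X (shift r p)"
  by (induction r p rule: shift.induct) auto

lemma path_within_funpow_shift: "path_within r s X p \<Longrightarrow> path_within r s X ((shift r ^^ n) p)"
  by (induction n) (auto simp: path_within_shift)

lemma path_within_Int_nonempty:
  assumes "path_within r s X p" and "path_within r s Y p"
  shows "X \<inter> Y \<noteq> {}"
proof (cases p)
  case (Fin es)
  with assms show ?thesis by (cases es) auto
qed (use assms in auto)

lemma not_shift_tail_equiv_if_within_disjoint:
  assumes "path_within r s X \<alpha>" and "path_within r s Y \<beta>" and "X \<inter> Y = {}"
  shows "\<not> shift_tail_equiv r \<alpha> \<beta>"
proof
  assume "shift_tail_equiv r \<alpha> \<beta>"
  then obtain m n where eq: "(shift r ^^ m) \<alpha> = (shift r ^^ n) \<beta>"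
    unfolding shift_tail_equiv_def by blast
  have "path_within r s X ((shift r ^^ m) \<alpha>)"
    using assms(1) by (rule path_within_funpow_shift)
  moreover have "path_within r s Y ((shift r ^^ m) \<alpha>)"
    unfolding eq using assms(2) by (rule path_within_funpow_shift)
  ultimately show False
    using assms(3) path_within_Int_nonempty by blast
qed

definition continuable :: "'e set \<Rightarrow> ('e \<Rightarrow> 'v) \<Rightarrow> ('e \<Rightarrow> 'v) \<Rightarrow> 'v set \<Rightarrow> bool" where
  "continuable Ed r s X \<longleftrightarrow> (\<forall>v\<in>X. regular Ed s v \<longrightarrow> (\<exists>e\<in>Ed. s e = v \<and> r e \<in> X))"

lemma hereditary_continuable:
  assumes "hereditary V Ed r s H"
  shows "continuable Ed r s H"
  using assms unfolding continuable_def hereditary_def regular_def singular_def emits_def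
  by blast

lemma saturated_complement_continuable:
  assumes "is_graph V Ed r s" and "saturated V Ed r s H"
  shows "continuable Ed r s (V - H)"
  using assms unfolding continuable_def saturated_def is_graph_def emits_def by blast

lemma boundary_path_Fin_of_walk:
  assumes "0 < k" and "singular Ed s (u k)"
    and walk: "\<And>i. i < k \<Longrightarrow> g i \<in> Ed \<and> s (g i) = u i \<and> r (g i) = u (Suc i)"
  shows "is_boundary_path V Ed r s (Fin (map g [0..<k]))"
proof -
  have "r (last (map g [0..<k])) = u k"
    using assms(1) walk[of "k - 1"] by (simp add: last_map)
  moreover have "set (map g [0..<k]) \<subseteq> Ed"
    using walk by auto
  moreover have "r (map g [0..<k] ! i) = s (map g [0..<k] ! Suc i)" if "Suc i < k" for i
    using that walk[of i] walk[of "Suc i"] by simp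
  ultimately show ?thesis
    using assms(1,2) by simp
qed

lemma boundary_path_of_walk:
  assumes "u 0 \<in> V" and "\<And>i. u i \<in> X"
    and walk: "\<And>i. regular Ed s (u i) \<Longrightarrow> g i \<in> Ed \<and> s (g i) = u i \<and> r (g i) = u (Suc i)"
  shows "\<exists>p. is_boundary_path V Ed r s p \<and> path_within r s X p"
proof (cases "\<exists>n. singular Ed s (u n)")
  case False
  then have "is_boundary_path V Ed r s (Inf g) \<and> path_within r s X (Inf g)"
    using walk assms(2) unfolding regular_def by (metis is_boundary_path.simps(3) path_within.simps(3))
  then show ?thesis by blast
next
  case True
  define k where "k = (LEAST n. singular Ed s (u n))"
  have k: "singular Ed s (u k)"
    unfolding k_def using True by (rule LeastI_ex)
  have walk_k: "g i \<in> Ed \<and> s (g i) = u i \<and> r (g i) = u (Suc i)" if "i < k" for i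
    using walk that not_less_Least unfolding k_def regular_def by blast
  show ?thesis
  proof (cases "k = 0")
    case True
    then show ?thesis
      using k assms(1,2) by (intro exI[of _ "Vtx (u 0)"]) simp
  next
    case False
    then have "is_boundary_path V Ed r s (Fin (map g [0..<k]))"
      using k walk_k by (intro boundary_path_Fin_of_walk) simp_all
    moreover have "path_within r s X (Fin (map g [0..<k]))"
      using False walk_k assms(2) by auto
    ultimately show ?thesis by blast
  qed
qed

lemma boundary_path_within_continuable:
  assumes "continuable Ed r s X" and "X \<subseteq> V" and "v \<in> X"
  shows "\<exists>p. is_boundary_path V Ed r s p \<and> path_within r s X p"
proof -
  obtain nxt where nxt:
    "\<And>x. x \<in> X \<Longrightarrow> regular Ed s x \<Longrightarrow> nxt x \<in> Ed \<and> s (nxt x) = x \<and> r (nxt x) \<in> X"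
    using assms(1) unfolding continuable_def by metis
  \<comment> \<open>nxt is unspecified at singular vertices, so the walk stays put there to remain in X\<close>
  define step where "step x = (if regular Ed s x then r (nxt x) else x)" for x
  define u where "u n = (step ^^ n) v" for n
  have u_Suc: "u (Suc n) = step (u n)" for n
    by (simp add: u_def)
  have u_in: "u n \<in> X" for n
    by (induction n) (use assms(3) nxt in \<open>auto simp: u_def step_def\<close>)
  show ?thesis
  proof (rule boundary_path_of_walk)
    show "u 0 \<in> V" using assms(2,3) by (simp add: u_def subsetD)
    show "u i \<in> X" for i by (rule u_in)
    show "nxt (u i) \<in> Ed \<and> s (nxt (u i)) = u i \<and> r (nxt (u i)) = u (Suc i)"
      if "regular Ed s (u i)" for i
      using that nxt[OF u_in] by (simp add: u_Suc step_def)
  qed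
qed

theorem lemma4p4:
  fixes V :: "'v set" and Ed :: "'e set" and r s :: "'e \<Rightarrow> 'v" and H :: "'v set"
  assumes "is_graph V Ed r s"
    and "\<forall>\<alpha> \<beta>. is_boundary_path V Ed r s \<alpha> \<and> is_boundary_path V Ed r s \<beta>
                 \<longrightarrow> shift_tail_equiv r \<alpha> \<beta>"
    and "H \<noteq> {}" and "hereditary V Ed r s H" and "saturated V Ed r s H"
  shows "H = V"
proof (rule ccontr)
  assume "H \<noteq> V"
  have "H \<subseteq> V" using assms(4) unfolding hereditary_def by blast
  with \<open>H \<noteq> V\<close> obtain v where v: "v \<in> V - H" by blast
  obtain w where w: "w \<in> H" using assms(3) by blast
  obtain \<alpha> where \<alpha>: "is_boundary_path V Ed r s \<alpha>" "path_within r s H \<alpha>"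
    using boundary_path_within_continuable[OF hereditary_continuable[OF assms(4)] \<open>H \<subseteq> V\<close> w]
    by blast
  obtain \<beta> where \<beta>: "is_boundary_path V Ed r s \<beta>" "path_within r s (V - H) \<beta>"
    using boundary_path_within_continuable[OF saturated_complement_continuable[OF assms(1,5)] _ v]
    by blast
  have "\<not> shift_tail_equiv r \<alpha> \<beta>"
    using \<alpha>(2) \<beta>(2) by (rule not_shift_tail_equiv_if_within_disjoint) blast
  with assms(2) \<alpha>(1) \<beta>(1) show False by blast
qed

end
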